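(* Let $(Z, S(1), S(0), Y(1), Y(0), \mathbf{X})$ be random variables with $Z\in\{0,1\}$, $S(z)\in\{0,1\}$, $Y(z)$ real-valued, $\mathbf{X}$ a covariate vector, observed $S=S(Z)$, and assume Randomization: $Z \perp\!\!\!\perp \{S(1),S(0),Y(1),Y(0),\mathbf{X}\}$ and Monotonicity ($S(1)\ge S(0)$ a.s.). Suppose there are constants $\varepsilon_1,\varepsilon_0$ (not depending on $\mathbf{X}$) with $\varepsilon_1 = E\{Y(1)\mid U=s\bar{s},\mathbf{X}\}/E\{Y(1)\mid U=ss,\mathbf{X}\}$ and $\varepsilon_0 = E\{Y(0)\mid U=s\bar{s},\mathbf{X}\}/E\{Y(0)\mid U=\bar{s}\bar{s},\mathbf{X}\}$. Then $$\varepsilon_1 = \frac{E\{Y(1)\mid U=s\bar{s}, e_{1,u}(\mathbf{X})\}}{E\{Y(1)\mid U=ss, e_{1,u}(\mathbf{X})\}}\quad (u=s\bar{s},ss),\qquad \varepsilon_0 = \frac{E\{Y(0)\mid U=s\bar{s}, e_{0,u}(\mathbf{X})\}}{E\{Y(0)\mid U=\bar{s}\bar{s}, e_{0,u}(\mathbf{X})\}}\quad (u=s\bar{s},\bar{s}\bar{s}).$$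
   Context: The principal stratum is $U=(S(1),S(0))$, whose values $(1,1),(1,0),(0,1),(0,0)$ are labelled $ss, s\bar{s}, \bar{s}s, \bar{s}\bar{s}$. Principal scores: $e_u(\mathbf{X}) = \Pr(U=u\mid \mathbf{X})$. Define $e_{1,s\bar{s}}(\mathbf{X}) = e_{s\bar{s}}(\mathbf{X})/\{e_{s\bar{s}}(\mathbf{X})+e_{ss}(\mathbf{X})\}$, $e_{1,ss}(\mathbf{X}) = e_{ss}(\mathbf{X})/\{e_{s\bar{s}}(\mathbf{X})+e_{ss}(\mathbf{X})\}$, $e_{0,s\bar{s}}(\mathbf{X}) = e_{s\bar{s}}(\mathbf{X})/\{e_{s\bar{s}}(\mathbf{X})+e_{\bar{s}\bar{s}}(\mathbf{X})\}$, $e_{0,\bar{s}\bar{s}}(\mathbf{X}) = e_{\bar{s}\bar{s}}(\mathbf{X})/\{e_{s\bar{s}}(\mathbf{X})+e_{\bar{s}\bar{s}}(\mathbf{X})\}$. Expectations are assumed to exist and conditioning events and denominators to be positive/nonzero. *)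

theory Defs
  imports "HOL-Probability.Probability"
begin

text \<open>Principal strata: U = (S(1), S(0)) :: bool \<times> bool.
  ss = (True,True), s-sbar = (True,False), sbar-s = (False,True), sbar-sbar = (False,False).\<close>

definition stratum :: "('a \<Rightarrow> bool) \<Rightarrow> ('a \<Rightarrow> bool) \<Rightarrow> 'a \<Rightarrow> bool \<times> bool" where
  "stratum S1 S0 = (\<lambda>\<omega>. (S1 \<omega>, S0 \<omega>))"

definition gen_sa :: "'a measure \<Rightarrow> ('a \<Rightarrow> 'b) \<Rightarrow> 'b measure \<Rightarrow> 'a measure" where
  "gen_sa M W N = vimage_algebra (space M) W N"

text \<open>E{Y | A, F} := E[Y 1_A | F] / P(A | F) (a version, as a function on the sample space).\<close>
definition cond_exp_given :: "'a measure \<Rightarrow> 'a measure \<Rightarrow> 'a set \<Rightarrow> ('a \<Rightarrow> real) \<Rightarrow> 'a \<Rightarrow> real" where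
  "cond_exp_given M F A Y = (\<lambda>\<omega>. real_cond_exp M F (\<lambda>x. indicator A x * Y x) \<omega>
                                   / real_cond_exp M F (indicator A) \<omega>)"

definition strat_event :: "'a measure \<Rightarrow> ('a \<Rightarrow> bool \<times> bool) \<Rightarrow> bool \<times> bool \<Rightarrow> 'a set" where
  "strat_event M U u = {\<omega> \<in> space M. U \<omega> = u}"

definition pscore :: "'a measure \<Rightarrow> ('a \<Rightarrow> 'd::topological_space) \<Rightarrow> ('a \<Rightarrow> bool \<times> bool) \<Rightarrow> bool \<times> bool \<Rightarrow> 'a \<Rightarrow> real" where
  "pscore M X U u = real_cond_exp M (gen_sa M X borel) (indicator (strat_event M U u))"

abbreviation "ss \<equiv> (True, True)"
abbreviation "ssbar \<equiv> (True, False)"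
abbreviation "sbarsbar \<equiv> (False, False)"

definition pscore1 :: "'a measure \<Rightarrow> ('a \<Rightarrow> 'd::topological_space) \<Rightarrow> ('a \<Rightarrow> bool \<times> bool) \<Rightarrow> bool \<times> bool \<Rightarrow> 'a \<Rightarrow> real" where
  "pscore1 M X U u = (\<lambda>\<omega>. pscore M X U u \<omega> / (pscore M X U ssbar \<omega> + pscore M X U ss \<omega>))"

definition pscore0 :: "'a measure \<Rightarrow> ('a \<Rightarrow> 'd::topological_space) \<Rightarrow> ('a \<Rightarrow> bool \<times> bool) \<Rightarrow> bool \<times> bool \<Rightarrow> 'a \<Rightarrow> real" where
  "pscore0 M X U u = (\<lambda>\<omega>. pscore M X U u \<omega> / (pscore M X U ssbar \<omega> + pscore M X U sbarsbar \<omega>))"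

end

theory Submission
  imports Defs
begin

text \<open>Write a = e_{ssbar}(X) and b = e_{ss}(X) (resp. b = e_{sbarsbar}(X)). Every score
  e_{1,u}(X), e_{0,u}(X) is a/(a+b) or b/(a+b), so the odds a/b are a Borel function \<phi> of the
  coarser score e. The hypothesis on \<epsilon> says E{Y 1_{E1} | X} = \<epsilon> \<phi>(e) E{Y 1_{E2} | X}, and
  trivially P(E1 | X) = \<phi>(e) P(E2 | X); conditioning both identities on e (tower property,
  \<phi>(e) being e-measurable) and dividing gives the same ratio \<epsilon> given e.\<close>

lemma subalgebra_gen_sa:
  fixes W :: "'a \<Rightarrow> 'b::topological_space"
  assumes "W \<in> borel_measurable G" and "space G = space M"
  shows "subalgebra G (gen_sa M W borel)"
  unfolding subalgebra_def gen_sa_def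
proof
  show "space (vimage_algebra (space M) W borel) = space G"
    using assms(2) by simp
  have "W -` A \<inter> space M \<in> sets G" if "A \<in> sets borel" for A
    using measurable_sets[OF assms(1) that] assms(2) by simp
  then show "sets (vimage_algebra (space M) W borel) \<subseteq> sets G"
    by (auto simp: sets_vimage_algebra2)
qed

lemma measurable_gen_sa: "W \<in> borel_measurable (gen_sa M W borel)"
  unfolding gen_sa_def by (rule measurable_vimage_algebra1) simp

lemma (in prob_space) sigma_finite_subalgebra_of_subalgebra:
  assumes "subalgebra M G"
  shows "sigma_finite_subalgebra M G"
  by (intro finite_measure_subalgebra_is_sigma_finite)
    (simp add: finite_measure_subalgebra_def finite_measure_subalgebra_axioms_def
      assms finite_measure_axioms)

lemma (in prob_space) real_cond_exp_factor_coarsen: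
  assumes G: "subalgebra M G" and H: "subalgebra G H"
    and f: "f \<in> borel_measurable H" and V: "integrable M V" and W: "integrable M W"
    and factor: "AE x in M. real_cond_exp M G V x = f x * real_cond_exp M G W x"
  shows "AE x in M. real_cond_exp M H V x = f x * real_cond_exp M H W x"
proof -
  have HM: "subalgebra M H"
    using G H unfolding subalgebra_def by auto
  interpret Gs: sigma_finite_subalgebra M G
    using sigma_finite_subalgebra_of_subalgebra[OF G] .
  interpret Hs: sigma_finite_subalgebra M H
    using sigma_finite_subalgebra_of_subalgebra[OF HM] .
  let ?fW = "\<lambda>x. f x * real_cond_exp M G W x"
  have iV: "integrable M (real_cond_exp M G V)" and iW: "integrable M (real_cond_exp M G W)"
    using Gs.real_cond_exp_int(1) V W by auto
  have m_fW: "?fW \<in> borel_measurable M"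
    using measurable_from_subalg[OF HM f] iW by measurable
  have i_fW: "integrable M ?fW"
    using integrable_cong_AE[OF borel_measurable_integrable[OF iV] m_fW factor] iV by simp
  have "AE x in M. real_cond_exp M H V x = real_cond_exp M H (real_cond_exp M G V) x"
    using Hs.real_cond_exp_nested_subalg[OF G H V] by (auto elim: AE_mp)
  moreover have "AE x in M. real_cond_exp M H (real_cond_exp M G V) x = real_cond_exp M H ?fW x"
    by (rule Hs.real_cond_exp_cong[OF factor borel_measurable_integrable[OF iV] m_fW])
  moreover have "AE x in M. real_cond_exp M H ?fW x = f x * real_cond_exp M H (real_cond_exp M G W) x"
    by (rule Hs.real_cond_exp_mult[OF f borel_measurable_integrable[OF iW] i_fW])
  moreover have "AE x in M. real_cond_exp M H (real_cond_exp M G W) x = real_cond_exp M H W x"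
    by (rule Hs.real_cond_exp_nested_subalg[OF G H W])
  ultimately show ?thesis
    by eventually_elim simp
qed

lemma (in prob_space) cond_exp_given_ratio_coarsen:
  assumes G: "subalgebra M G" and H: "subalgebra G H"
    and E1: "E1 \<in> sets M" and E2: "E2 \<in> sets M" and Y: "integrable M Y"
    and pos: "AE x in M. real_cond_exp M G (indicator E1) x > 0 \<and> real_cond_exp M G (indicator E2) x > 0"
    and \<phi>: "\<phi> \<in> borel_measurable H"
    and odds: "AE x in M. real_cond_exp M G (indicator E1) x / real_cond_exp M G (indicator E2) x = \<phi> x"
    and nzG: "AE x in M. cond_exp_given M G E2 Y x \<noteq> 0"
    and ratioG: "AE x in M. \<epsilon> = cond_exp_given M G E1 Y x / cond_exp_given M G E2 Y x"
    and nzH: "AE x in M. cond_exp_given M H E2 Y x \<noteq> 0"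
  shows "AE x in M. \<epsilon> = cond_exp_given M H E1 Y x / cond_exp_given M H E2 Y x"
proof -
  have ind: "integrable M (indicator E :: 'a \<Rightarrow> real)" if "E \<in> sets M" for E
    using that by (simp add: integrable_real_indicator emeasure_finite less_top[symmetric])
  have indY: "integrable M (\<lambda>x. indicator E x * Y x)" if "E \<in> sets M" for E
    using integrable_mult_indicator[OF that Y] by simp
  have "AE x in M. real_cond_exp M G (\<lambda>x. indicator E1 x * Y x) x
      = (\<epsilon> * \<phi> x) * real_cond_exp M G (\<lambda>x. indicator E2 x * Y x) x"
    using pos odds nzG ratioG unfolding cond_exp_given_def
    by eventually_elim (auto simp: field_simps)
  then have Y_factor: "AE x in M. real_cond_exp M H (\<lambda>x. indicator E1 x * Y x) x
      = (\<epsilon> * \<phi> x) * real_cond_exp M H (\<lambda>x. indicator E2 x * Y x) x"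
    using \<phi> by (intro real_cond_exp_factor_coarsen[OF G H _ indY indY] E1 E2) auto
  have "AE x in M. real_cond_exp M G (indicator E1) x = \<phi> x * real_cond_exp M G (indicator E2) x"
    using pos odds by eventually_elim (auto simp: field_simps)
  then have P_factor: "AE x in M. real_cond_exp M H (indicator E1) x = \<phi> x * real_cond_exp M H (indicator E2) x"
    by (rule real_cond_exp_factor_coarsen[OF G H \<phi> ind[OF E1] ind[OF E2]])
  have "AE x in M. \<phi> x \<noteq> 0"
    using pos odds by eventually_elim auto
  then show ?thesis
    using Y_factor P_factor nzH unfolding cond_exp_given_def
    by eventually_elim (auto simp: field_simps)
qed

lemma odds_borel_of_share:
  fixes a b e :: "'a \<Rightarrow> real"
  assumes pos: "AE x in M. a x > 0 \<and> b x > 0"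
    and share: "e = (\<lambda>x. a x / (a x + b x)) \<or> e = (\<lambda>x. b x / (a x + b x))"
  obtains \<phi> where "\<phi> \<in> borel_measurable (gen_sa M e borel)" and "AE x in M. a x / b x = \<phi> x"
proof -
  have e: "e \<in> borel_measurable (gen_sa M e borel)"
    by (rule measurable_gen_sa)
  show ?thesis
  proof (cases "e = (\<lambda>x. a x / (a x + b x))")
    case True
    show ?thesis
    proof (rule that[of "\<lambda>x. e x / (1 - e x)"])
      show "(\<lambda>x. e x / (1 - e x)) \<in> borel_measurable (gen_sa M e borel)"
        using e by measurable
      show "AE x in M. a x / b x = e x / (1 - e x)"
        using pos unfolding True
      proof eventually_elim
        case (elim x)
        then have "1 - a x / (a x + b x) = b x / (a x + b x)"
          by (simp add: field_simps)
        with elim show ?case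
          by simp
      qed
    qed
  next
    case False
    with share have e_def: "e = (\<lambda>x. b x / (a x + b x))" by blast
    show ?thesis
    proof (rule that[of "\<lambda>x. (1 - e x) / e x"])
      show "(\<lambda>x. (1 - e x) / e x) \<in> borel_measurable (gen_sa M e borel)"
        using e by measurable
      show "AE x in M. a x / b x = (1 - e x) / e x"
        using pos unfolding e_def
      proof eventually_elim
        case (elim x)
        then have "1 - b x / (a x + b x) = a x / (a x + b x)"
          by (simp add: field_simps)
        with elim show ?case
          by simp
      qed
    qed
  qed
qed

lemma (in prob_space) cond_exp_given_ratio_share:
  fixes X :: "'a \<Rightarrow> 'd::topological_space" and E1 E2 :: "'a set"
  defines "a \<equiv> real_cond_exp M (gen_sa M X borel) (indicator E1)"
    and "b \<equiv> real_cond_exp M (gen_sa M X borel) (indicator E2)"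
  assumes X: "X \<in> borel_measurable M"
    and E1: "E1 \<in> sets M" and E2: "E2 \<in> sets M" and Y: "integrable M Y"
    and pos_a: "AE x in M. a x > 0" and pos_b: "AE x in M. b x > 0"
    and share: "e = (\<lambda>x. a x / (a x + b x)) \<or> e = (\<lambda>x. b x / (a x + b x))"
    and nzX: "AE x in M. cond_exp_given M (gen_sa M X borel) E2 Y x \<noteq> 0"
    and ratioX: "AE x in M. \<epsilon> = cond_exp_given M (gen_sa M X borel) E1 Y x
                                  / cond_exp_given M (gen_sa M X borel) E2 Y x"
    and nze: "AE x in M. cond_exp_given M (gen_sa M e borel) E2 Y x \<noteq> 0"
  shows "AE x in M. \<epsilon> = cond_exp_given M (gen_sa M e borel) E1 Y x
                         / cond_exp_given M (gen_sa M e borel) E2 Y x"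
proof -
  have pos: "AE x in M. a x > 0 \<and> b x > 0"
    using pos_a pos_b by eventually_elim simp
  obtain \<phi> where \<phi>: "\<phi> \<in> borel_measurable (gen_sa M e borel)" and odds: "AE x in M. a x / b x = \<phi> x"
    using odds_borel_of_share[OF pos share] .
  have G: "subalgebra M (gen_sa M X borel)"
    using subalgebra_gen_sa[OF X] by simp
  have "e \<in> borel_measurable (gen_sa M X borel)"
    using share unfolding a_def b_def by (elim disjE) (simp_all add: borel_measurable_cond_exp)
  then have H: "subalgebra (gen_sa M X borel) (gen_sa M e borel)"
    by (rule subalgebra_gen_sa) (simp add: gen_sa_def)
  show ?thesis
    using pos odds unfolding a_def b_def
    by (intro cond_exp_given_ratio_coarsen[OF G H E1 E2 Y _ \<phi> _ nzX ratioX nze])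
qed

lemma strat_event_sets:
  assumes "S1 \<in> M \<rightarrow>\<^sub>M count_space UNIV" and "S0 \<in> M \<rightarrow>\<^sub>M count_space UNIV"
  shows "strat_event M (stratum S1 S0) u \<in> sets M"
proof -
  have "strat_event M (stratum S1 S0) u = (S1 -` {fst u} \<inter> space M) \<inter> (S0 -` {snd u} \<inter> space M)"
    unfolding strat_event_def stratum_def by (cases u) auto
  then show ?thesis
    using measurable_sets[OF assms(1)] measurable_sets[OF assms(2)] by simp
qed

theorem lemmaA9:
  fixes M :: "'a measure"
    and Z S1 S0 :: "'a \<Rightarrow> bool"
    and Y1 Y0 :: "'a \<Rightarrow> real"
    and X :: "'a \<Rightarrow> 'd::euclidean_space"
    and \<epsilon>1 \<epsilon>0 :: real
  defines "U \<equiv> stratum S1 S0"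
  assumes P: "prob_space M"
    and rvZ: "Z \<in> M \<rightarrow>\<^sub>M count_space UNIV"
    and rvS1: "S1 \<in> M \<rightarrow>\<^sub>M count_space UNIV"
    and rvS0: "S0 \<in> M \<rightarrow>\<^sub>M count_space UNIV"
    and rvX: "X \<in> M \<rightarrow>\<^sub>M borel"
    and intY1: "integrable M Y1"
    and intY0: "integrable M Y0"
    and randomization: "prob_space.indep_set M (sets (gen_sa M Z (count_space UNIV)))
          (sets (gen_sa M (\<lambda>\<omega>. (S1 \<omega>, S0 \<omega>, Y1 \<omega>, Y0 \<omega>, X \<omega>))
             (count_space UNIV \<Otimes>\<^sub>M (count_space UNIV \<Otimes>\<^sub>M (borel \<Otimes>\<^sub>M (borel \<Otimes>\<^sub>M borel))))))"
    and monotonicity: "AE \<omega> in M. S0 \<omega> \<longrightarrow> S1 \<omega>"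
    and pos_ss: "AE \<omega> in M. pscore M X U ss \<omega> > 0"
    and pos_ssbar: "AE \<omega> in M. pscore M X U ssbar \<omega> > 0"
    and pos_sbarsbar: "AE \<omega> in M. pscore M X U sbarsbar \<omega> > 0"
    and nz1X: "AE \<omega> in M. cond_exp_given M (gen_sa M X borel) (strat_event M U ss) Y1 \<omega> \<noteq> 0"
    and nz0X: "AE \<omega> in M. cond_exp_given M (gen_sa M X borel) (strat_event M U sbarsbar) Y0 \<omega> \<noteq> 0"
    and nz1e: "\<And>u. u \<in> {ssbar, ss} \<Longrightarrow> AE \<omega> in M.
          cond_exp_given M (gen_sa M (pscore1 M X U u) borel) (strat_event M U ss) Y1 \<omega> \<noteq> 0"
    and nz0e: "\<And>u. u \<in> {ssbar, sbarsbar} \<Longrightarrow> AE \<omega> in M.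
          cond_exp_given M (gen_sa M (pscore0 M X U u) borel) (strat_event M U sbarsbar) Y0 \<omega> \<noteq> 0"
    and eps1: "AE \<omega> in M. \<epsilon>1 =
          cond_exp_given M (gen_sa M X borel) (strat_event M U ssbar) Y1 \<omega>
        / cond_exp_given M (gen_sa M X borel) (strat_event M U ss) Y1 \<omega>"
    and eps0: "AE \<omega> in M. \<epsilon>0 =
          cond_exp_given M (gen_sa M X borel) (strat_event M U ssbar) Y0 \<omega>
        / cond_exp_given M (gen_sa M X borel) (strat_event M U sbarsbar) Y0 \<omega>"
  shows "(\<forall>u \<in> {ssbar, ss}. AE \<omega> in M. \<epsilon>1 =
            cond_exp_given M (gen_sa M (pscore1 M X U u) borel) (strat_event M U ssbar) Y1 \<omega>
          / cond_exp_given M (gen_sa M (pscore1 M X U u) borel) (strat_event M U ss) Y1 \<omega>)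
       \<and> (\<forall>u \<in> {ssbar, sbarsbar}. AE \<omega> in M. \<epsilon>0 =
            cond_exp_given M (gen_sa M (pscore0 M X U u) borel) (strat_event M U ssbar) Y0 \<omega>
          / cond_exp_given M (gen_sa M (pscore0 M X U u) borel) (strat_event M U sbarsbar) Y0 \<omega>)"
proof -
  interpret prob_space M by (rule P)
  have E: "strat_event M U u \<in> sets M" for u
    unfolding U_def by (rule strat_event_sets[OF rvS1 rvS0])
  note ratio_share = cond_exp_given_ratio_share[OF rvX E E]
  have "AE \<omega> in M. \<epsilon>1 =
            cond_exp_given M (gen_sa M (pscore1 M X U u) borel) (strat_event M U ssbar) Y1 \<omega>
          / cond_exp_given M (gen_sa M (pscore1 M X U u) borel) (strat_event M U ss) Y1 \<omega>"
    if u: "u \<in> {ssbar, ss}" for u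
    using pos_ssbar pos_ss u unfolding pscore_def
    by (intro ratio_share[OF intY1 _ _ _ nz1X eps1 nz1e[OF u]])
      (auto simp: pscore1_def pscore_def)
  moreover have "AE \<omega> in M. \<epsilon>0 =
            cond_exp_given M (gen_sa M (pscore0 M X U u) borel) (strat_event M U ssbar) Y0 \<omega>
          / cond_exp_given M (gen_sa M (pscore0 M X U u) borel) (strat_event M U sbarsbar) Y0 \<omega>"
    if u: "u \<in> {ssbar, sbarsbar}" for u
    using pos_ssbar pos_sbarsbar u unfolding pscore_def
    by (intro ratio_share[OF intY0 _ _ _ nz0X eps0 nz0e[OF u]])
      (auto simp: pscore0_def pscore_def)
  ultimately show ?thesis
    by blast
qed

end
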